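(* Let $(Y_n)$ satisfy Condition 1 and let $X_n$ be the number of rounds of the associated leader election process. Then $\mathbb E X_n<\infty$ for every $n$, $\mathbb E X_{n+1}-\mathbb E X_n=O(1/n)$, and $d_W(X_n,X_m)=O\bigl(|n-m|/(n\wedge m)\bigr)$ uniformly in $n,m\ge1$.
   Context: Condition 1: $(Y_n)_{n\ge1}$ is a sequence of random variables with $1\le Y_n\le n$ for all $n$ and $\Pr(Y_n=n)<1$ for $n\ge2$ (so $Y_1=1$), such that: (i) $\Pr(Y_n\le k)\ge\Pr(Y_{n+1}\le k)$ for all $n,k\ge1$; (ii) there are constants $\alpha\in(0,1)$, $\varepsilon>0$ and a sequence $\delta_n=O((\log n)^{-1-\varepsilon})$ with $\mathbb E Y_{n+1}-\mathbb E Y_n=\alpha+O(\delta_n)$; (iii) for such $\varepsilon,\delta_n$, $\Pr(|Y_n-\alpha n|>\delta_n n)=O(n^{-2-\varepsilon})$. (Here $\log 1$ is interpreted as a fixed positive number.) Leader election process: $X_1=0$ and $X_n\overset{d}{=}X_{Y_n}+1$ for $n\ge2$, with $Y_n$ independent of $(X_i)_{i\le n}$; i.e. $X_n$ is the number of steps to absorption at $1$ of the Markov chain started at $n$ with transition probabilities $P(i,j)=\Pr(Y_i=j)$. $d_W$ denotes the Wasserstein distance $d_W(X,Y)=\inf\mathbb E|X'-Y'|$ over couplings of the laws of $X$ and $Y$. *)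

theory Defs
  imports "HOL-Probability.Probability" "HOL-Library.Landau_Symbols"
begin

definition couplings :: "nat pmf \<Rightarrow> nat pmf \<Rightarrow> (nat \<times> nat) pmf set" where
  "couplings p q = {c. map_pmf fst c = p \<and> map_pmf snd c = q}"

definition dW :: "nat pmf \<Rightarrow> nat pmf \<Rightarrow> ennreal" where
  "dW p q = (INF c \<in> couplings p q.
      \<integral>\<^sup>+ x. ennreal \<bar>real (fst x) - real (snd x)\<bar> \<partial>(measure_pmf c))"

definition condition1 :: "(nat \<Rightarrow> nat pmf) \<Rightarrow> bool" where
  "condition1 Y \<longleftrightarrow>
     (\<forall>n\<ge>1. set_pmf (Y n) \<subseteq> {1..n}) \<and>
     (\<forall>n\<ge>2. pmf (Y n) n < 1) \<and>
     (\<forall>n\<ge>1. \<forall>k\<ge>1. measure_pmf.prob (Y n) {..k} \<ge> measure_pmf.prob (Y (n+1)) {..k}) \<and>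
     (\<exists>(\<alpha>::real) (\<epsilon>::real) (\<delta>::nat \<Rightarrow> real).
        0 < \<alpha> \<and> \<alpha> < 1 \<and> 0 < \<epsilon> \<and>
        \<delta> \<in> O(\<lambda>n. (if n = 1 then 1 else ln (real n)) powr (-1 - \<epsilon>)) \<and>
        (\<lambda>n. measure_pmf.expectation (Y (n+1)) real
              - measure_pmf.expectation (Y n) real - \<alpha>) \<in> O(\<delta>) \<and>
        (\<lambda>n. measure_pmf.prob (Y n) {k. \<bar>real k - \<alpha> * real n\<bar> > \<delta> n * real n})
           \<in> O(\<lambda>n. real n powr (-2 - \<epsilon>)))"

definition leader_election :: "(nat \<Rightarrow> nat pmf) \<Rightarrow> (nat \<Rightarrow> nat pmf) \<Rightarrow> bool" where
  "leader_election Y X \<longleftrightarrow>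
     X 1 = return_pmf 0 \<and>
     (\<forall>n\<ge>2. X n = bind_pmf (Y n) (\<lambda>k. map_pmf Suc (X k)))"

end

theory Submission imports Defs begin

(* Write mean n for E X_n.  Conditioning on Y_n gives the renewal recursion
   mean n = 1 + E mean(Y_n); since Pr(Y_n = n) < 1, the same recursion for truncated means
   shows E X_n < \<infinity>.  The dominance hypothesis (i) yields a monotone coupling Y_n \<le> Y_{n+1},
   and by induction also monotone couplings X_n \<le> X_m for n \<le> m.  Under such a coupling
   E|X_n - X_m| = mean m - mean n, so both the O(1/n) increment bound and the Wasserstein bound
   follow once we know  n * (mean (n+1) - mean n) \<le> A  for a constant A.
   That bound is proved by strong induction against a slowly increasing weight
   h(x) = A exp(-K (ln x)^(-\<epsilon>)): coupling Y_n with Y_{n+1} bounds the increment at n by the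
   drift E Y_{n+1} - E Y_n \<approx> \<alpha> times the largest earlier increment in the window [\<alpha> n, \<gamma> n],
   plus tail terms of order n^(-2-\<epsilon>); the choice of h absorbs the error of order (ln n)^(-1-\<epsilon>). *)

lemma exp_neg_le_inverse: "0 \<le> (y::real) \<Longrightarrow> exp (- y) \<le> 1 / (1 + y)"
  using exp_ge_add_one_self[of y] by (simp add: exp_minus field_simps)

text \<open>Convexity of L \<mapsto> L powr (-\<epsilon>): the tangent line lies below the graph.
  This is what makes the weight function grow by the right factor between \<gamma> n and n.\<close>
lemma powr_neg_tangent_bound:
  fixes L c \<epsilon> :: real
  assumes e: "0 < \<epsilon>" and c: "0 < c" and Lc: "1 \<le> L - c"
  shows "L powr (-\<epsilon>) + \<epsilon> * c * L powr (-1-\<epsilon>) \<le> (L - c) powr (-\<epsilon>)"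
proof -
  have L: "L > 0" using c Lc by linarith
  define u where "u = c / L"
  have u: "0 < u" "u < 1" using c L Lc unfolding u_def by (auto simp: field_simps)
  have Lu: "L - c = L * (1 - u)" unfolding u_def using L by (simp add: field_simps)
  have "\<epsilon> * u \<le> - \<epsilon> * ln (1 - u)"
    using mult_left_mono[OF ln_le_minus_one[of "1 - u"], of \<epsilon>] u e by simp
  then have "1 + \<epsilon> * u \<le> exp (- \<epsilon> * ln (1 - u))"
    using exp_ge_add_one_self[of "- \<epsilon> * ln (1 - u)"] by linarith
  also have "exp (- \<epsilon> * ln (1 - u)) = (1 - u) powr (-\<epsilon>)"
    using u by (simp add: powr_def)
  finally have one_minus_u: "1 + \<epsilon> * u \<le> (1 - u) powr (-\<epsilon>)" .
  have "L powr (-\<epsilon>) * (1 + \<epsilon> * u) \<le> L powr (-\<epsilon>) * (1 - u) powr (-\<epsilon>)"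
    using one_minus_u by (intro mult_left_mono) auto
  also have "\<dots> = (L - c) powr (-\<epsilon>)"
    unfolding Lu using L u by (simp add: powr_mult)
  finally have scaled: "L powr (-\<epsilon>) * (1 + \<epsilon> * u) \<le> (L - c) powr (-\<epsilon>)" .
  have "L powr (-1-\<epsilon>) = L powr (-1) * L powr (-\<epsilon>)"
    using powr_add[of L "-1" "-\<epsilon>"] by simp
  then have "L powr (-1-\<epsilon>) = L powr (-\<epsilon>) / L"
    using L by (simp add: powr_neg_one)
  then have "L powr (-\<epsilon>) * (1 + \<epsilon> * u) = L powr (-\<epsilon>) + \<epsilon> * c * L powr (-1-\<epsilon>)"
    unfolding u_def using L by (simp add: field_simps)
  then show ?thesis using scaled by simp
qed

text \<open>Polynomial decay beats any power of the logarithm: x^(-\<epsilon>) = O((ln x)^(-1-\<epsilon>)).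
  Used to absorb the tail probabilities n^(-2-\<epsilon>) into the error rate (ln n)^(-1-\<epsilon>).\<close>
lemma powr_neg_le_ln_powr:
  fixes x \<epsilon> :: real
  assumes e: "0 < \<epsilon>" and x: "1 < x"
  shows "x powr (-\<epsilon>) \<le> (\<epsilon> / (1 + \<epsilon>)) powr (-1-\<epsilon>) * ln x powr (-1-\<epsilon>)"
proof -
  define \<beta> where "\<beta> = \<epsilon> / (1 + \<epsilon>)"
  have b: "0 < \<beta>" unfolding \<beta>_def using e by simp
  have lx: "0 < ln x" using x by simp
  have "ln x \<le> x powr \<beta> / \<beta>" using x b by (intro ln_powr_bound) auto
  then have "ln x powr (1 + \<epsilon>) \<le> (x powr \<beta> / \<beta>) powr (1 + \<epsilon>)"
    using lx e by (intro powr_mono2) auto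
  also have "\<dots> = x powr (\<beta> * (1 + \<epsilon>)) / \<beta> powr (1 + \<epsilon>)"
    using x b by (simp add: powr_divide powr_powr)
  also have "\<beta> * (1 + \<epsilon>) = \<epsilon>" unfolding \<beta>_def using e by (simp add: field_simps)
  finally have ln_vs_x: "ln x powr (1 + \<epsilon>) * \<beta> powr (1 + \<epsilon>) \<le> x powr \<epsilon>"
    using b by (simp add: field_simps)
  have "x powr (-\<epsilon>) = 1 / x powr \<epsilon>" by (simp add: powr_minus_divide)
  also have "\<dots> \<le> 1 / (ln x powr (1 + \<epsilon>) * \<beta> powr (1 + \<epsilon>))"
    using ln_vs_x lx b x by (intro divide_left_mono) (auto intro!: mult_pos_pos)
  also have "\<dots> = \<beta> powr (-1-\<epsilon>) * ln x powr (-1-\<epsilon>)"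
    using powr_minus_divide[of \<beta> "1+\<epsilon>"] powr_minus_divide[of "ln x" "1+\<epsilon>"]
    by (simp add: algebra_simps)
  finally show ?thesis unfolding \<beta>_def .
qed

lemma ln_powr_neg_eventually_le:
  fixes \<epsilon> \<eta> :: real
  assumes e: "0 < \<epsilon>" and h: "0 < \<eta>"
  shows "\<exists>N::nat. \<forall>n\<ge>N. ln (real n) powr (-1-\<epsilon>) \<le> \<eta>"
proof -
  define \<Lambda> where "\<Lambda> = \<eta> powr (-1/(1+\<epsilon>))"
  have L: "0 < \<Lambda>" unfolding \<Lambda>_def using h by simp
  have m1: "-1/(1+\<epsilon>) * (-1-\<epsilon>) = 1" using e by (simp add: field_simps)
  have "\<Lambda> powr (-1-\<epsilon>) = \<eta>"
    unfolding \<Lambda>_def using h e by (simp only: powr_powr m1) simp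
  moreover have "ln (real n) powr (-1-\<epsilon>) \<le> \<Lambda> powr (-1-\<epsilon>)" if "n \<ge> nat \<lceil>exp \<Lambda>\<rceil>" for n
  proof -
    have n: "exp \<Lambda> \<le> real n" using that by linarith
    then have "\<Lambda> \<le> ln (real n)"
      using ln_le_cancel_iff[of "exp \<Lambda>" "real n"] exp_gt_zero[of \<Lambda>] by simp
    then show ?thesis using L e by (intro powr_mono2') auto
  qed
  ultimately show ?thesis by blast
qed

lemma real_ge_of_nat_ceiling: "nat \<lceil>y\<rceil> \<le> n \<Longrightarrow> y \<le> real n"
  using real_nat_ceiling_ge[of y] of_nat_mono[of "nat \<lceil>y\<rceil>" n] by linarith

lemma mult_le_1_if_le_inverse: "0 \<le> (Z::real) \<Longrightarrow> 0 < t \<Longrightarrow> t \<le> 1 / (Z + 1) \<Longrightarrow> Z * t \<le> 1"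
  by (simp add: field_simps)

lemma one_le_ln_3: "1 \<le> ln (3::real)"
  using ln_le_cancel_iff[of "exp 1" 3] exp_le by simp

text \<open>The algebraic heart of the induction step: with t the error rate, the contraction factor
  (\<alpha> + e t)/(\<alpha> - c1 t) from the window, divided by the weight gain 1 + K t, plus the tail
  contribution c4 t, stays below 1 when K is large enough and t small enough.\<close>
lemma balance_polynomial:
  fixes \<alpha> c1 e c4 K t :: real
  assumes a: "0 < \<alpha>" and c: "0 \<le> c1" "0 \<le> e" "0 \<le> c4" and K: "\<alpha> * K = c1 + e + c4 * \<alpha> + 1"
    and t: "0 < t" "c1 * t \<le> \<alpha> / 2" "c4 * t \<le> 1/2" "(c4 * \<alpha> * K + c1 * K) * t \<le> 1"
  shows "(\<alpha> + e * t) / ((\<alpha> - c1 * t) * (1 + K * t)) + c4 * t \<le> 1"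
proof -
  have "0 < \<alpha> * K" using K c a by (simp add: add_nonneg_pos)
  then have K0: "0 \<le> K" using a by (simp add: zero_less_mult_iff)
  define u where "u = \<alpha> - c1 * t"
  define v where "v = 1 + K * t"
  have u: "0 < u" unfolding u_def using t a by linarith
  have v: "0 < v" unfolding v_def using K0 t(1) by (simp add: add_pos_nonneg)
  have uv0: "u * v = \<alpha> + (\<alpha> * K) * t - c1 * t - c1 * K * t^2"
    unfolding u_def v_def by (simp add: algebra_simps power2_eq_square)
  have uv: "u * v = \<alpha> + (e + c4 * \<alpha> + 1) * t - c1 * K * t^2"
    unfolding uv0 K by (simp add: algebra_simps)
  have uvle: "u * v \<le> \<alpha> + (\<alpha> * K - c1) * t"
  proof -
    have "0 \<le> c1 * K * t^2" using c K0 by simp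
    then show ?thesis using uv K by (simp add: algebra_simps)
  qed
  have "c4 * t * (u * v) \<le> c4 * t * (\<alpha> + (\<alpha> * K - c1) * t)"
    using uvle c t by (intro mult_left_mono) auto
  also have "\<dots> \<le> c4 * \<alpha> * t + c4 * \<alpha> * K * t * t"
    using c t by (simp add: algebra_simps)
  finally have A: "c4 * t * (u * v) \<le> c4 * \<alpha> * t + c4 * \<alpha> * K * t * t" .
  have "(c4 * \<alpha> * K + c1 * K) * t * t \<le> 1 * t" using t(4) t(1) by (intro mult_right_mono) auto
  then have B: "(c4 * \<alpha> * K + c1 * K) * t * t \<le> t" by simp
  have B': "c4 * \<alpha> * K * (t * t) + c1 * K * (t * t) \<le> t" using B by (simp add: algebra_simps)
  have A': "c4 * t * (u * v) \<le> c4 * \<alpha> * t + c4 * \<alpha> * K * (t * t)" using A by (simp add: algebra_simps)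
  have uv': "u * v = \<alpha> + e * t + c4 * \<alpha> * t + t - c1 * K * (t * t)"
    using uv by (simp add: algebra_simps power2_eq_square)
  have ex: "(1 - c4 * t) * (u * v) = u * v - c4 * t * (u * v)" by (simp add: algebra_simps)
  have main: "\<alpha> + e * t \<le> (1 - c4 * t) * (u * v)"
    unfolding ex using A' B' uv' by linarith
  have "(\<alpha> + e * t) / (u * v) \<le> 1 - c4 * t"
    using main u v by (simp add: divide_le_eq mult.commute)
  then show ?thesis unfolding u_def v_def by simp
qed

text \<open>The same inequality in the form consumed by the induction step: hg and hx are the
  weights at \<gamma> x and at x, related by the weight gain 1 + K t.\<close>
lemma balance_inequality:
  fixes \<alpha> c1 e c4 K t x P hg hx :: real
  assumes a: "0 < \<alpha>" and c: "0 \<le> c1" "0 \<le> e" "0 \<le> c4"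
    and K: "\<alpha> * K = c1 + e + c4 * \<alpha> + 1"
    and t: "0 < t" "c1 * t \<le> \<alpha> / 2" "c4 * t \<le> 1/2" "(c4 * \<alpha> * K + c1 * K) * t \<le> 1"
    and x: "0 < x" and h: "0 \<le> hg" "0 \<le> hx" and gain: "hg * (1 + K * t) \<le> hx"
    and tails: "P * (x^2 + 1) \<le> c4 * t"
  shows "x * (\<alpha> + e * t) / ((\<alpha> - c1 * t) * x) * hg + P * (x^2 + 1) * hx \<le> hx"
proof -
  have "0 < \<alpha> * K" using K c a by (simp add: add_nonneg_pos)
  then have K0: "0 \<le> K" using a by (simp add: zero_less_mult_iff)
  have v: "0 < 1 + K * t" using K0 t(1) by (simp add: add_pos_nonneg)
  define q where "q = (\<alpha> + e * t) / (\<alpha> - c1 * t)"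
  have q0: "0 \<le> q" unfolding q_def using t a c by (intro divide_nonneg_pos) auto
  have "x * (\<alpha> + e * t) / ((\<alpha> - c1 * t) * x) = q" unfolding q_def using x by simp
  moreover have "q * hg \<le> q * (hx / (1 + K * t))"
    using gain v q0 by (intro mult_left_mono) (auto simp: field_simps)
  moreover have "P * (x^2 + 1) * hx \<le> c4 * t * hx"
    using tails h by (intro mult_right_mono) auto
  moreover have "q * (hx / (1 + K * t)) + c4 * t * hx
      = ((\<alpha> + e * t) / ((\<alpha> - c1 * t) * (1 + K * t)) + c4 * t) * hx"
    unfolding q_def by (simp add: algebra_simps)
  moreover have "\<dots> \<le> 1 * hx"
    using balance_polynomial[OF a c K t] h by (intro mult_right_mono) auto
  ultimately show ?thesis by simp
qed

lemma antimono_from_steps: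
  fixes g :: "nat \<Rightarrow> real"
  assumes "\<And>n. n \<ge> 1 \<Longrightarrow> g (Suc n) \<le> g n" "a \<le> b" "1 \<le> a"
  shows "g b \<le> g a"
  using assms(2)
proof (induction b rule: dec_induct)
  case (step m)
  then show ?case using assms(1)[of m] assms(3) by simp
qed simp

section \<open>Monotone couplings of distributions on the naturals\<close>

text \<open>Length of the overlap of the intervals [a,b] and [x,y].  Pairing the quantile intervals
  of p and q by their overlaps is the quantile coupling.\<close>
definition overlap :: "real \<Rightarrow> real \<Rightarrow> real \<Rightarrow> real \<Rightarrow> real" where
  "overlap a b x y = max 0 (min b y - max a x)"

lemma overlap_commute: "overlap a b x y = overlap x y a b"
  unfolding overlap_def by (simp add: min.commute max.commute)

lemma overlap_as_clamp_diff: "a \<le> b \<Longrightarrow> x \<le> y \<Longrightarrow>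
  overlap a b x y = max a (min b y) - max a (min b x)"
  unfolding overlap_def by (auto simp: max_def min_def)

lemma overlap_sums:
  fixes A :: "nat \<Rightarrow> real"
  assumes mono: "\<And>j. A j \<le> A (Suc j)" and A0: "A 0 = 0" and lim: "A \<longlonglongrightarrow> 1"
    and ab: "0 \<le> a" "a \<le> b" "b \<le> 1"
  shows "(\<lambda>j. overlap a b (A j) (A (Suc j))) sums (b - a)"
proof -
  define \<phi> where "\<phi> x = max a (min b x)" for x
  have eq: "overlap a b (A j) (A (Suc j)) = \<phi> (A (Suc j)) - \<phi> (A j)" for j
    using overlap_as_clamp_diff[OF ab(2) mono[of j]] by (simp add: \<phi>_def)
  have partial: "(\<Sum>j<J. overlap a b (A j) (A (Suc j))) = \<phi> (A J) - \<phi> (A 0)" for J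
    unfolding eq by (rule sum_lessThan_telescope)
  have "(\<lambda>J. \<phi> (A J) - \<phi> (A 0)) \<longlonglongrightarrow> \<phi> 1 - \<phi> (A 0)"
    unfolding \<phi>_def by (intro tendsto_intros lim)
  moreover have "\<phi> 1 - \<phi> (A 0) = b - a" using ab A0 by (simp add: \<phi>_def)
  ultimately show ?thesis unfolding sums_def partial by simp
qed

lemma measure_lessThan_tendsto_1:
  fixes p :: "nat pmf"
  shows "(\<lambda>J. measure p {..<J}) \<longlonglongrightarrow> 1"
proof -
  have "(\<lambda>J. measure p {..<J}) \<longlonglongrightarrow> measure p (\<Union>J. {..<J})"
    by (rule measure_pmf.finite_Lim_measure_incseq) (auto simp: incseq_def)
  moreover have "(\<Union>J. {..<J::nat}) = UNIV" by auto
  ultimately show ?thesis by simp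
qed

lemma pmf_eq_measure_atMost_diff:
  fixes p :: "nat pmf"
  shows "pmf p i = measure p {..i} - measure p {..<i}"
proof -
  have "{..i} = insert i {..<i}" by auto
  hence "measure p {..i} = measure p {i} + measure p {..<i}"
    by (simp add: measure_pmf.finite_measure_Union[symmetric] del: insert_is_Un)
  then show ?thesis by (simp add: measure_pmf_single)
qed

lemma coupling_of_weights:
  fixes p q :: "nat pmf" and c :: "nat \<Rightarrow> nat \<Rightarrow> real"
  assumes c_nn: "\<And>i j. 0 \<le> c i j"
    and row: "\<And>i. (\<lambda>j. c i j) sums pmf p i" and col: "\<And>j. (\<lambda>i. c i j) sums pmf q j"
  shows "\<exists>C. map_pmf fst C = p \<and> map_pmf snd C = q \<and> (\<forall>z\<in>set_pmf C. c (fst z) (snd z) \<noteq> 0)"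
proof -
  have c0: "c i j = 0" if "pmf p i = 0" for i j
    using row[of i] c_nn suminf_eq_zero_iff[of "\<lambda>j. c i j"] that
    by (auto simp: sums_iff)
  text \<open>Conditional law of the second coordinate given that the first one equals i.\<close>
  define K where "K i = (if pmf p i = 0 then return_pmf i else embed_pmf (\<lambda>j. c i j / pmf p i))" for i
  have pK: "pmf (K i) j = c i j / pmf p i" if "pmf p i \<noteq> 0" for i j
  proof -
    have pos: "pmf p i > 0" using that pmf_nonneg[of p i] by linarith
    have "(\<lambda>j. c i j / pmf p i) sums (pmf p i / pmf p i)" by (intro sums_divide row)
    hence "(\<lambda>j. ennreal (c i j / pmf p i)) sums ennreal 1"
      using pos c_nn by (subst sums_ennreal) auto
    hence "(\<integral>\<^sup>+j. ennreal (c i j / pmf p i) \<partial>count_space UNIV) = 1"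
      unfolding nn_integral_count_space_nat by (simp add: sums_unique[symmetric])
    then have "pmf (embed_pmf (\<lambda>j. c i j / pmf p i)) j = c i j / pmf p i"
      using pos c_nn by (intro pmf_embed_pmf) auto
    then show ?thesis unfolding K_def using that by simp
  qed
  define C where "C = bind_pmf p (\<lambda>i. map_pmf (Pair i) (K i))"
  have marginal1: "map_pmf fst C = p"
    unfolding C_def map_bind_pmf by (simp add: pmf.map_comp o_def map_pmf_const bind_return_pmf')
  have marginal2: "map_pmf snd C = q"
  proof (rule pmf_eqI)
    fix j
    have "map_pmf snd C = bind_pmf p K"
      unfolding C_def map_bind_pmf by (simp add: pmf.map_comp o_def)
    hence "ennreal (pmf (map_pmf snd C) j) = (\<integral>\<^sup>+i. pmf (K i) j \<partial>measure_pmf p)"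
      by (simp add: ennreal_pmf_bind)
    also have "\<dots> = (\<integral>\<^sup>+i. ennreal (c i j) \<partial>count_space UNIV)"
      unfolding nn_integral_measure_pmf
    proof (intro nn_integral_cong)
      fix i
      have "pmf p i * pmf (K i) j = c i j"
        by (cases "pmf p i = 0") (auto simp: pK c0)
      then show "ennreal (pmf p i) * ennreal (pmf (K i) j) = ennreal (c i j)"
        by (simp add: ennreal_mult[symmetric])
    qed
    also have "\<dots> = ennreal (pmf q j)"
      unfolding nn_integral_count_space_nat
      using col c_nn by (subst sums_unique[symmetric]) (auto simp: sums_ennreal)
    finally show "pmf (map_pmf snd C) j = pmf q j" by simp
  qed
  have "c (fst z) (snd z) \<noteq> 0" if "z \<in> set_pmf C" for z
  proof -
    obtain i j where z: "z = (i, j)" "i \<in> set_pmf p" "j \<in> set_pmf (K i)"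
      using \<open>z \<in> set_pmf C\<close> unfolding C_def by auto
    hence "pmf p i \<noteq> 0" "pmf (K i) j \<noteq> 0" by (simp_all add: set_pmf_eq)
    thus ?thesis using z pK by force
  qed
  then show ?thesis using marginal1 marginal2 by blast
qed

text \<open>If q is stochastically larger than p (its distribution function is pointwise smaller),
  then p and q admit a coupling supported on the diagonal half {(i,j). i \<le> j}: the quantile
  coupling, whose weights are the overlaps of the quantile intervals of p and q.\<close>
lemma monotone_coupling:
  fixes p q :: "nat pmf"
  assumes dom: "\<And>k. measure q {..k} \<le> measure p {..k}"
  shows "\<exists>c. map_pmf fst c = p \<and> map_pmf snd c = q \<and> (\<forall>z\<in>set_pmf c. fst z \<le> snd z)"
proof -
  define Fm where "Fm i = measure p {..<i}" for i
  define Gm where "Gm j = measure q {..<j}" for j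
  have FS: "Fm (Suc i) = measure p {..i}" for i unfolding Fm_def lessThan_Suc_atMost ..
  have GS: "Gm (Suc i) = measure q {..i}" for i unfolding Gm_def lessThan_Suc_atMost ..
  define c where "c i j = overlap (Fm i) (Fm (Suc i)) (Gm j) (Gm (Suc j))" for i j
  have Fmono: "Fm i \<le> Fm (Suc i)" and Gmono: "Gm i \<le> Gm (Suc i)" for i
    unfolding Fm_def Gm_def by (auto intro!: measure_pmf.finite_measure_mono)
  have Fb: "0 \<le> Fm i" "Fm i \<le> 1" and Gb: "0 \<le> Gm i" "Gm i \<le> 1" for i
    unfolding Fm_def Gm_def by auto
  have pF: "pmf p i = Fm (Suc i) - Fm i" for i using pmf_eq_measure_atMost_diff[of p i] FS Fm_def by simp
  have qG: "pmf q j = Gm (Suc j) - Gm j" for j using pmf_eq_measure_atMost_diff[of q j] GS Gm_def by simp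
  have row: "(\<lambda>j. c i j) sums pmf p i" for i
    unfolding c_def pF
    by (rule overlap_sums[where A=Gm, OF Gmono])
      (use Gb Fb Fmono measure_lessThan_tendsto_1[of q] in \<open>auto simp: Gm_def[abs_def]\<close>)
  have col: "(\<lambda>i. c i j) sums pmf q j" for j
    unfolding c_def qG overlap_commute[of "Fm _"]
    by (rule overlap_sums[where A=Fm, OF Fmono])
      (use Gb Fb Gmono measure_lessThan_tendsto_1[of p] in \<open>auto simp: Fm_def[abs_def]\<close>)
  have below_diagonal_zero: "c i j = 0" if "j < i" for i j
  proof -
    have "Gm (Suc j) \<le> Fm (Suc j)" unfolding GS FS by (rule dom)
    also have "Fm (Suc j) \<le> Fm i" unfolding Fm_def using that
      by (intro measure_pmf.finite_measure_mono) auto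
    finally show "c i j = 0" unfolding c_def overlap_def by (auto simp: max_def min_def)
  qed
  have c_nn: "0 \<le> c i j" for i j unfolding c_def overlap_def by simp
  obtain C where C: "map_pmf fst C = p" "map_pmf snd C = q" "\<forall>z\<in>set_pmf C. c (fst z) (snd z) \<noteq> 0"
    using coupling_of_weights[OF c_nn row col] by blast
  have "fst z \<le> snd z" if "z \<in> set_pmf C" for z
  proof -
    have "c (fst z) (snd z) \<noteq> 0" using C(3) that by blast
    then show ?thesis using below_diagonal_zero by (meson not_le)
  qed
  then show ?thesis using C(1,2) by blast
qed

section \<open>The leader election process\<close>

locale leader_election_process =
  fixes Y X :: "nat \<Rightarrow> nat pmf"
  assumes supp: "\<And>n. n \<ge> 1 \<Longrightarrow> set_pmf (Y n) \<subseteq> {1..n}"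
  and not_stuck: "\<And>n. n \<ge> 2 \<Longrightarrow> pmf (Y n) n < 1"
  and dom: "\<And>n k. n \<ge> 1 \<Longrightarrow> k \<ge> 1 \<Longrightarrow> measure (Y (n+1)) {..k} \<le> measure (Y n) {..k}"
  and X1: "X 1 = return_pmf 0"
  and Xrec: "\<And>n. n \<ge> 2 \<Longrightarrow> X n = bind_pmf (Y n) (\<lambda>k. map_pmf Suc (X k))"
begin

lemma finite_support_Y: "n \<ge> 1 \<Longrightarrow> finite (set_pmf (Y n))"
  using supp by (meson finite_atLeastAtMost finite_subset)

lemma expectation_Y: "n \<ge> 1 \<Longrightarrow> measure_pmf.expectation (Y n) f = (\<Sum>k\<in>{1..n}. pmf (Y n) k * f k)"
  using supp[of n] by (subst integral_measure_pmf_real[where A="{1..n}"]) (auto simp: mult.commute)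

lemma nn_integral_X_rec:
  fixes f :: "nat \<Rightarrow> ennreal"
  assumes "n \<ge> 2"
  shows "(\<integral>\<^sup>+t. f t \<partial>X n) = (\<Sum>k\<in>{1..n}. (\<integral>\<^sup>+i. f (Suc i) \<partial>X k) * pmf (Y n) k)"
proof -
  have "(\<integral>\<^sup>+t. f t \<partial>X n) = (\<integral>\<^sup>+k. (\<integral>\<^sup>+i. f (Suc i) \<partial>X k) \<partial>Y n)"
    using assms by (simp add: Xrec)
  also have "\<dots> = (\<Sum>k\<in>{1..n}. (\<integral>\<^sup>+i. f (Suc i) \<partial>X k) * pmf (Y n) k)"
    using supp[of n] assms by (intro nn_integral_measure_pmf_support) auto
  finally show ?thesis .
qed

lemma expectation_X_rec:
  fixes f :: "nat \<Rightarrow> real"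
  assumes n: "n \<ge> 2" and intk: "\<And>k. k \<in> {1..n} \<Longrightarrow> integrable (X k) (\<lambda>i. f (Suc i))"
    and intn: "integrable (X n) f" and nn: "\<And>x. 0 \<le> f x"
  shows "measure_pmf.expectation (X n) f =
     (\<Sum>k\<in>{1..n}. pmf (Y n) k * measure_pmf.expectation (X k) (\<lambda>i. f (Suc i)))"
proof -
  have "ennreal (measure_pmf.expectation (X n) f) = (\<integral>\<^sup>+t. ennreal (f t) \<partial>X n)"
    using intn nn by (intro nn_integral_eq_integral[symmetric]) auto
  also have "\<dots> = (\<Sum>k\<in>{1..n}. (\<integral>\<^sup>+i. ennreal (f (Suc i)) \<partial>X k) * pmf (Y n) k)"
    by (rule nn_integral_X_rec[OF n])
  also have "\<dots> = (\<Sum>k\<in>{1..n}. ennreal (pmf (Y n) k * measure_pmf.expectation (X k) (\<lambda>i. f (Suc i))))"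
  proof (intro sum.cong refl)
    fix k assume k: "k \<in> {1..n}"
    have "(\<integral>\<^sup>+i. ennreal (f (Suc i)) \<partial>X k) = ennreal (measure_pmf.expectation (X k) (\<lambda>i. f (Suc i)))"
      using intk[OF k] nn by (intro nn_integral_eq_integral) auto
    then show "(\<integral>\<^sup>+i. ennreal (f (Suc i)) \<partial>X k) * pmf (Y n) k
        = ennreal (pmf (Y n) k * measure_pmf.expectation (X k) (\<lambda>i. f (Suc i)))"
      by (simp add: ennreal_mult' mult.commute)
  qed
  also have "\<dots> = ennreal (\<Sum>k\<in>{1..n}. pmf (Y n) k * measure_pmf.expectation (X k) (\<lambda>i. f (Suc i)))"
    using nn by (intro sum_ennreal) (auto intro!: mult_nonneg_nonneg integral_nonneg)
  finally show ?thesis using nn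
    by (subst (asm) ennreal_inj) (auto intro!: sum_nonneg mult_nonneg_nonneg integral_nonneg)
qed

text \<open>Truncated means E min(X_n, J) are finite by construction; they satisfy the first-step
  recursion and are bounded in J because Pr(Y_n = n) < 1.\<close>
definition trunc_mean :: "nat \<Rightarrow> nat \<Rightarrow> real" where
  "trunc_mean J n = measure_pmf.expectation (X n) (\<lambda>t. real (min t J))"

lemma integrable_min: "integrable (X n) (\<lambda>t. real (min t J))"
  by (rule measure_pmf.integrable_const_bound[where B="real J"]) auto

lemma trunc_mean_rec:
  assumes n: "n \<ge> 2"
  shows "trunc_mean (Suc J) n = (\<Sum>k\<in>{1..n}. pmf (Y n) k * (1 + trunc_mean J k))"
proof -
  have shift: "measure_pmf.expectation (X k) (\<lambda>i. real (min (Suc i) (Suc J))) = 1 + trunc_mean J k"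
    for k
  proof -
    have "measure_pmf.expectation (X k) (\<lambda>i. real (min (Suc i) (Suc J)))
        = measure_pmf.expectation (X k) (\<lambda>i. 1 + real (min i J))"
      by (intro Bochner_Integration.integral_cong) auto
    also have "\<dots> = 1 + trunc_mean J k" unfolding trunc_mean_def
      by (subst Bochner_Integration.integral_add) (auto intro: integrable_min)
    finally show ?thesis .
  qed
  have "trunc_mean (Suc J) n = (\<Sum>k\<in>{1..n}. pmf (Y n) k *
      measure_pmf.expectation (X k) (\<lambda>i. real (min (Suc i) (Suc J))))"
    unfolding trunc_mean_def
    by (rule expectation_X_rec[OF n])
      (auto intro: measure_pmf.integrable_const_bound[where B="real (Suc J)"] integrable_min)
  then show ?thesis by (simp only: shift)
qed

lemma trunc_mean_Suc_mono: "trunc_mean J n \<le> trunc_mean (Suc J) n"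
  unfolding trunc_mean_def by (intro integral_mono integrable_min) auto

text \<open>Strong induction on n: the self-loop term Pr(Y_n = n) E min(X_n, J) is absorbed
  because Pr(Y_n = n) < 1.\<close>
lemma trunc_mean_bounded: "n \<ge> 1 \<Longrightarrow> \<exists>B. \<forall>J. trunc_mean J n \<le> B"
proof (induction n rule: less_induct)
  case (less n)
  show ?case
  proof (cases "n = 1")
    case True
    then show ?thesis using X1 by (intro exI[of _ 0]) (simp add: trunc_mean_def)
  next
    case False
    with less.prems have n2: "n \<ge> 2" by simp
    have "\<forall>k\<in>{1..<n}. \<exists>B. \<forall>J. trunc_mean J k \<le> B" using less.IH by auto
    then obtain Bf where Bf: "\<And>k J. k \<in> {1..<n} \<Longrightarrow> trunc_mean J k \<le> Bf k"
      by metis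
    define p where "p = pmf (Y n) n"
    have p: "0 \<le> p" "p < 1" using not_stuck[OF n2] p_def by auto
    define S where "S = (\<Sum>k\<in>{1..<n}. pmf (Y n) k * (1 + Bf k))"
    have step: "trunc_mean (Suc J) n \<le> (S + p) / (1 - p)" for J
    proof -
      have ins: "{1..n} = insert n {1..<n}" using n2 by auto
      have "trunc_mean (Suc J) n
          = (\<Sum>k\<in>{1..<n}. pmf (Y n) k * (1 + trunc_mean J k)) + p * (1 + trunc_mean J n)"
        unfolding trunc_mean_rec[OF n2] ins p_def by (simp add: add.commute)
      also have "\<dots> \<le> S + p * (1 + trunc_mean (Suc J) n)"
        unfolding S_def
        by (intro add_mono sum_mono mult_left_mono trunc_mean_Suc_mono p) (auto intro: Bf)
      finally have "trunc_mean (Suc J) n * (1 - p) \<le> S + p" by (simp add: algebra_simps)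
      then show ?thesis using p by (simp add: field_simps)
    qed
    have "trunc_mean J n \<le> max 0 ((S + p) / (1 - p))" for J
      using step by (cases J) (auto simp: trunc_mean_def intro: max.coboundedI2)
    then show ?thesis by blast
  qed
qed

theorem mean_finite: assumes "n \<ge> 1" shows "(\<integral>\<^sup>+t. ennreal (real t) \<partial>X n) < \<infinity>"
proof -
  obtain B where B: "\<And>J. trunc_mean J n \<le> B" using trunc_mean_bounded[OF assms] by blast
  have "(\<integral>\<^sup>+t. ennreal (real t) \<partial>X n) = (\<integral>\<^sup>+t. (SUP J. ennreal (real (min t J))) \<partial>X n)"
  proof (intro nn_integral_cong)
    fix t :: nat
    show "ennreal (real t) = (SUP J. ennreal (real (min t J)))"
      by (intro antisym SUP_upper2[where i=t]) (auto intro!: SUP_least)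
  qed
  also have "\<dots> = (SUP J. (\<integral>\<^sup>+t. ennreal (real (min t J)) \<partial>X n))"
    by (intro nn_integral_monotone_convergence_SUP) (auto simp: incseq_def le_fun_def)
  also have "\<dots> = (SUP J. ennreal (trunc_mean J n))"
    unfolding trunc_mean_def by (subst nn_integral_eq_integral) (auto intro: integrable_min)
  also have "\<dots> \<le> ennreal B" using B by (intro SUP_least ennreal_leI) auto
  finally show ?thesis by (simp add: le_less_trans)
qed

definition mean :: "nat \<Rightarrow> real" where
  "mean n = measure_pmf.expectation (X n) real"

lemma integrable_X: "n \<ge> 1 \<Longrightarrow> integrable (X n) real"
  using mean_finite by (intro integrableI_nonneg) auto

lemma mean_nonneg: "0 \<le> mean n"
  unfolding mean_def by (intro Bochner_Integration.integral_nonneg) auto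

lemma mean_1: "mean 1 = 0"
  using X1 unfolding mean_def by simp

lemma mean_rec:
  assumes n: "n \<ge> 2"
  shows "mean n = 1 + measure_pmf.expectation (Y n) mean"
proof -
  have shift: "measure_pmf.expectation (X k) (\<lambda>i. real (Suc i)) = 1 + mean k" if "k \<in> {1..n}" for k
    using integrable_X[of k] that unfolding mean_def by (simp add: Bochner_Integration.integral_add)
  have "mean n = (\<Sum>k\<in>{1..n}. pmf (Y n) k * measure_pmf.expectation (X k) (\<lambda>i. real (Suc i)))"
    unfolding mean_def using n
    by (intro expectation_X_rec) (auto intro!: Bochner_Integration.integrable_add integrable_X)
  also have "\<dots> = (\<Sum>k\<in>{1..n}. pmf (Y n) k * (1 + mean k))"
    by (rule sum.cong[OF refl]) (simp only: shift)
  also have "\<dots> = (\<Sum>k\<in>{1..n}. pmf (Y n) k) + (\<Sum>k\<in>{1..n}. pmf (Y n) k * mean k)"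
    by (simp add: algebra_simps sum.distrib)
  also have "(\<Sum>k\<in>{1..n}. pmf (Y n) k) = 1" using n supp by (intro sum_pmf_eq_1) auto
  finally show ?thesis using n by (simp add: expectation_Y)
qed

lemma Y_monotone_coupling:
  "n \<ge> 1 \<Longrightarrow> \<exists>c. map_pmf fst c = Y n \<and> map_pmf snd c = Y (n+1) \<and> (\<forall>z\<in>set_pmf c. fst z \<le> snd z)"
proof (rule monotone_coupling)
  fix k assume n: "n \<ge> 1"
  show "measure (Y (n+1)) {..k} \<le> measure (Y n) {..k}"
  proof (cases "k = 0")
    case True
    have "0 \<notin> set_pmf (Y (n+1))" using supp[of "n+1"] by auto
    then have "measure (Y (n+1)) {..k} = 0" using True by (simp add: measure_pmf_single set_pmf_eq)
    then show ?thesis by simp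
  qed (use dom n in auto)
qed

lemma coupling_Y_finite:
  assumes "map_pmf fst c = Y n" "map_pmf snd c = Y (n+1)" "n \<ge> 1"
  shows "finite (set_pmf c)"
proof -
  have "set_pmf c \<subseteq> set_pmf (Y n) \<times> set_pmf (Y (n+1))"
    unfolding assms(1,2)[symmetric] set_map_pmf by force
  then show ?thesis using finite_support_Y assms(3) by (auto intro: finite_subset)
qed

lemma coupling_Y_expectation_diff:
  fixes f g :: "nat \<Rightarrow> real"
  assumes "map_pmf fst c = Y n" "map_pmf snd c = Y (n+1)" "n \<ge> 1"
  shows "measure_pmf.expectation c (\<lambda>z. g (snd z) - f (fst z)) =
    measure_pmf.expectation (Y (n+1)) g - measure_pmf.expectation (Y n) f"
proof -
  have fin: "finite (set_pmf c)" by (rule coupling_Y_finite[OF assms])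
  have "measure_pmf.expectation c (\<lambda>z. g (snd z) - f (fst z)) =
     measure_pmf.expectation c (\<lambda>z. g (snd z)) - measure_pmf.expectation c (\<lambda>z. f (fst z))"
    by (rule Bochner_Integration.integral_diff[OF integrable_measure_pmf_finite[OF fin]
          integrable_measure_pmf_finite[OF fin]])
  then show ?thesis unfolding assms(1,2)[symmetric] by simp
qed

lemma expectation_Y_mono:
  assumes n: "n \<ge> 1" and f: "\<And>a b. 1 \<le> a \<Longrightarrow> a \<le> b \<Longrightarrow> f a \<le> (f b :: real)"
  shows "measure_pmf.expectation (Y n) f \<le> measure_pmf.expectation (Y (n+1)) f"
proof -
  obtain c where c: "map_pmf fst c = Y n" "map_pmf snd c = Y (n+1)" "\<forall>z\<in>set_pmf c. fst z \<le> snd z"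
    using Y_monotone_coupling[OF n] by blast
  have "fst z \<ge> 1" if "z \<in> set_pmf c" for z
  proof -
    have "fst z \<in> set_pmf (Y n)" using that by (simp flip: c(1))
    then show ?thesis using supp[OF n] by auto
  qed
  then have "0 \<le> measure_pmf.expectation c (\<lambda>z. f (snd z) - f (fst z))"
    using c(3) f by (intro integral_nonneg_AE) (auto simp: AE_measure_pmf_iff)
  then show ?thesis using coupling_Y_expectation_diff[OF c(1,2) n, of f f] by simp
qed

definition X_cdf :: "nat \<Rightarrow> nat \<Rightarrow> real" where
  "X_cdf j n = measure (X n) {..j}"

lemma X_cdf_rec:
  assumes n: "n \<ge> 2"
  shows "X_cdf j n = (\<Sum>k\<in>{1..n}. pmf (Y n) k * (if j = 0 then 0 else X_cdf (j - 1) k))"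
proof -
  have shift: "(\<lambda>i. indicator {..j} (Suc i) :: real) = (if j = 0 then (\<lambda>_. 0) else indicator {..j - 1})"
    by (auto simp: indicator_def fun_eq_iff)
  have "X_cdf j n = measure_pmf.expectation (X n) (indicator {..j})"
    unfolding X_cdf_def by simp
  also have "\<dots> = (\<Sum>k\<in>{1..n}. pmf (Y n) k *
      measure_pmf.expectation (X k) (\<lambda>i. indicator {..j} (Suc i) :: real))"
    using n by (intro expectation_X_rec) (auto intro: measure_pmf.integrable_const_bound[where B=1])
  finally show ?thesis unfolding shift by (simp add: X_cdf_def)
qed

lemma X_cdf_antimono_step: "n \<ge> 1 \<Longrightarrow> X_cdf j (Suc n) \<le> X_cdf j n"
proof (induction j arbitrary: n)
  case 0
  then show ?case using X_cdf_rec[of "Suc n" 0] by (simp add: X_cdf_def)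
next
  case (Suc j)
  show ?case
  proof (cases "n = 1")
    case True
    then show ?thesis using X1 by (simp add: X_cdf_def)
  next
    case False
    with Suc.prems have n2: "n \<ge> 2" by simp
    have antitone: "X_cdf j b \<le> X_cdf j a" if "1 \<le> a" "a \<le> b" for a b
      using antimono_from_steps[of "X_cdf j"] Suc.IH that by blast
    have "X_cdf (Suc j) (Suc n) = - measure_pmf.expectation (Y (n+1)) (\<lambda>k. - X_cdf j k)"
      using n2 by (simp add: X_cdf_rec[of "Suc n"] expectation_Y)
    also have "\<dots> \<le> - measure_pmf.expectation (Y n) (\<lambda>k. - X_cdf j k)"
      using expectation_Y_mono[of n "\<lambda>k. - X_cdf j k"] antitone n2 by force
    also have "\<dots> = X_cdf (Suc j) n" using n2 by (simp add: X_cdf_rec[of n] expectation_Y)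
    finally show ?thesis .
  qed
qed

lemma X_monotone_coupling:
  assumes "1 \<le> n" "n \<le> m"
  shows "\<exists>c. map_pmf fst c = X n \<and> map_pmf snd c = X m \<and> (\<forall>z\<in>set_pmf c. fst z \<le> snd z)"
proof (rule monotone_coupling)
  fix k
  show "measure (X m) {..k} \<le> measure (X n) {..k}"
    using antimono_from_steps[of "X_cdf k", OF X_cdf_antimono_step assms(2,1)] unfolding X_cdf_def by simp
qed

lemma monotone_coupling_cost:
  assumes "1 \<le> n" "n \<le> m" and c: "map_pmf fst c = X n" "map_pmf snd c = X m"
    "\<forall>z\<in>set_pmf c. fst z \<le> snd z"
  shows "(\<integral>\<^sup>+x. ennreal \<bar>real (fst x) - real (snd x)\<bar> \<partial>c) = ennreal (mean m - mean n)"
    and "mean n \<le> mean m"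
proof -
  have i1: "integrable c (\<lambda>x. real (fst x))"
    using integrable_X[of n] assms(1) unfolding c(1)[symmetric] by simp
  have i2: "integrable c (\<lambda>x. real (snd x))"
    using integrable_X[of m] assms(1,2) unfolding c(2)[symmetric] by simp
  have e: "measure_pmf.expectation c (\<lambda>x. real (snd x) - real (fst x)) = mean m - mean n"
    unfolding mean_def c(1,2)[symmetric] using i1 i2 by simp
  have "(\<integral>\<^sup>+x. ennreal \<bar>real (fst x) - real (snd x)\<bar> \<partial>c) =
      (\<integral>\<^sup>+x. ennreal (real (snd x) - real (fst x)) \<partial>c)"
    using c(3) by (intro nn_integral_cong_AE) (auto simp: AE_measure_pmf_iff)
  also have "\<dots> = ennreal (measure_pmf.expectation c (\<lambda>x. real (snd x) - real (fst x)))"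
    using c(3) i1 i2 by (intro nn_integral_eq_integral) (auto simp: AE_measure_pmf_iff)
  finally show "(\<integral>\<^sup>+x. ennreal \<bar>real (fst x) - real (snd x)\<bar> \<partial>c) = ennreal (mean m - mean n)"
    using e by simp
  have "0 \<le> measure_pmf.expectation c (\<lambda>x. real (snd x) - real (fst x))"
    using c(3) by (intro integral_nonneg_AE) (auto simp: AE_measure_pmf_iff)
  then show "mean n \<le> mean m" using e by simp
qed

lemma mean_mono: "1 \<le> n \<Longrightarrow> n \<le> m \<Longrightarrow> mean n \<le> mean m"
  using X_monotone_coupling monotone_coupling_cost(2) by blast

lemma dW_le_mean_diff:
  assumes "1 \<le> n" "n \<le> m"
  shows "dW (X n) (X m) \<le> ennreal (mean m - mean n)" and "dW (X m) (X n) \<le> ennreal (mean m - mean n)"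
proof -
  obtain c where c: "map_pmf fst c = X n" "map_pmf snd c = X m" "\<forall>z\<in>set_pmf c. fst z \<le> snd z"
    using X_monotone_coupling[OF assms] by blast
  have "c \<in> couplings (X n) (X m)" using c unfolding couplings_def by simp
  then show "dW (X n) (X m) \<le> ennreal (mean m - mean n)"
    unfolding dW_def monotone_coupling_cost(1)[OF assms c, symmetric] by (rule INF_lower)
  have "map_pmf prod.swap c \<in> couplings (X m) (X n)"
    using c unfolding couplings_def by (simp add: pmf.map_comp o_def)
  then have "dW (X m) (X n) \<le> (\<integral>\<^sup>+x. ennreal \<bar>real (fst x) - real (snd x)\<bar> \<partial>map_pmf prod.swap c)"
    unfolding dW_def by (rule INF_lower)
  also have "\<dots> = (\<integral>\<^sup>+x. ennreal \<bar>real (fst x) - real (snd x)\<bar> \<partial>c)"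
    by (simp add: abs_minus_commute)
  finally show "dW (X m) (X n) \<le> ennreal (mean m - mean n)"
    unfolding monotone_coupling_cost(1)[OF assms c] .
qed

lemma mean_telescope_bound:
  fixes H :: real
  assumes "y \<le> y'" "\<And>k. y \<le> k \<Longrightarrow> k < y' \<Longrightarrow> mean (Suc k) - mean k \<le> H"
  shows "mean y' - mean y \<le> H * (real y' - real y)"
  using assms
proof (induction y' rule: dec_induct)
  case (step m)
  have "mean m - mean y \<le> H * (real m - real y)" using step by auto
  moreover have "mean (Suc m) - mean m \<le> H" using step by auto
  ultimately show ?case by (simp add: algebra_simps)
qed simp

lemma expectation_Y_affine:
  assumes "n \<ge> 1"
  shows "measure_pmf.expectation (Y n) (\<lambda>k. H * real k + M * indicator B k) =
    H * measure_pmf.expectation (Y n) real + M * measure (Y n) B"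
proof -
  have fin: "finite (set_pmf (Y n))" using finite_support_Y assms by simp
  show ?thesis
    by (subst Bochner_Integration.integral_add[OF integrable_measure_pmf_finite[OF fin]
          integrable_measure_pmf_finite[OF fin]]) simp
qed

text \<open>Pointwise estimate behind the increment inequality: between two indices inside the
  window [a,b) the means grow at most with slope H; otherwise the difference of the means is
  at most mean m, charged to the event of leaving the window.\<close>
lemma mean_diff_window_bound:
  fixes a b H :: real
  assumes H: "H \<ge> 0"
    and window: "\<And>k. 1 \<le> k \<Longrightarrow> a \<le> real k \<Longrightarrow> real k < b \<Longrightarrow> mean (Suc k) - mean k \<le> H"
    and y: "1 \<le> y" "y \<le> y'" "y' \<le> m"
  shows "mean y' - mean y \<le> (H * real y' + mean m * indicator {k. real k > b} y')
           - (H * real y - mean m * indicator {k. real k < a} y)"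
proof (cases "real y < a \<or> real y' > b")
  case True
  have "mean y' \<le> mean m" using mean_mono y by simp
  moreover have "mean m \<le> mean m * indicator {k. real k > b} y' + mean m * indicator {k. real k < a} y"
    using True mean_nonneg[of m] by (auto simp: indicator_def)
  moreover have "0 \<le> H * (real y' - real y)" using H y by simp
  ultimately show ?thesis using mean_nonneg[of y] by (simp add: algebra_simps)
next
  case False
  then have "mean y' - mean y \<le> H * (real y' - real y)"
    using y by (intro mean_telescope_bound window) auto
  then show ?thesis using mean_nonneg[of m] by (simp add: algebra_simps indicator_def)
qed

text \<open>Coupling Y_n \<le> Y_{n+1} in the renewal recursion: if all increments in the window [a,b)
  are at most H, then the increment at n is at most H times the drift of Y, plus
  mean (n+1) times the probability that the coupled pair leaves the window.\<close>
lemma increment_by_coupling: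
  fixes a b H :: real
  assumes n: "n \<ge> 2" and H: "H \<ge> 0"
    and window: "\<And>k. 1 \<le> k \<Longrightarrow> a \<le> real k \<Longrightarrow> real k < b \<Longrightarrow> mean (Suc k) - mean k \<le> H"
  shows "mean (Suc n) - mean n \<le> H * (measure_pmf.expectation (Y (n+1)) real - measure_pmf.expectation (Y n) real)
      + (measure (Y n) {k. real k < a} + measure (Y (n+1)) {k. real k > b}) * mean (Suc n)"
proof -
  obtain c where c: "map_pmf fst c = Y n" "map_pmf snd c = Y (n+1)" "\<forall>z\<in>set_pmf c. fst z \<le> snd z"
    using Y_monotone_coupling[of n] n by auto
  have n1: "n \<ge> 1" using n by simp
  define A where "A = {k. real k < a}"
  define B where "B = {k. real k > b}"
  define M where "M = mean (Suc n)"
  have pointwise: "mean y' - mean y \<le> (H * real y' + M * indicator B y') - (H * real y - M * indicator A y)"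
    if "(y, y') \<in> set_pmf c" for y y'
  proof -
    have "y \<in> set_pmf (Y n)" "y' \<in> set_pmf (Y (n+1))"
      using that unfolding c(1,2)[symmetric] set_map_pmf by force+
    then have "1 \<le> y" "y' \<le> Suc n" using supp[of n] supp[of "n+1"] n by auto
    moreover have "y \<le> y'" using c(3) that by auto
    ultimately show ?thesis
      unfolding A_def B_def M_def by (intro mean_diff_window_bound[OF H window]) auto
  qed
  have "mean (Suc n) - mean n = measure_pmf.expectation (Y (n+1)) mean - measure_pmf.expectation (Y n) mean"
    using n mean_rec[of n] mean_rec[of "Suc n"] by simp
  also have "\<dots> = measure_pmf.expectation c (\<lambda>z. mean (snd z) - mean (fst z))"
    using coupling_Y_expectation_diff[OF c(1,2) n1] by simp
  also have "\<dots> \<le> measure_pmf.expectation c (\<lambda>z. (H * real (snd z) + M * indicator B (snd z))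
       - (H * real (fst z) - M * indicator A (fst z)))"
    using pointwise coupling_Y_finite[OF c(1,2) n1]
    by (intro integral_mono_AE integrable_measure_pmf_finite) (auto simp: AE_measure_pmf_iff)
  also have "\<dots> = measure_pmf.expectation (Y (n+1)) (\<lambda>k. H * real k + M * indicator B k)
      - measure_pmf.expectation (Y n) (\<lambda>k. H * real k + (- M) * indicator A k)"
    using coupling_Y_expectation_diff[OF c(1,2) n1] by simp
  also have "\<dots> = H * (measure_pmf.expectation (Y (n+1)) real - measure_pmf.expectation (Y n) real)
      + (measure (Y n) A + measure (Y (n+1)) B) * M"
    using expectation_Y_affine[of n H "-M" A] expectation_Y_affine[of "n+1" H M B] n1
    by (simp add: algebra_simps)
  finally show ?thesis unfolding A_def B_def M_def .
qed

lemma mean_le_by_increments: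
  fixes h :: "real \<Rightarrow> real"
  assumes hm: "mono h" and h0: "\<And>x. 0 \<le> h x"
    and IH: "\<And>k. 1 \<le> k \<Longrightarrow> k < n \<Longrightarrow> real k * (mean (Suc k) - mean k) \<le> h (real k)"
    and n: "n \<ge> 1"
  shows "mean n \<le> real n * h (real n)"
proof -
  have "mean n - mean 1 \<le> h (real n) * (real n - real 1)"
  proof (rule mean_telescope_bound[OF n])
    fix k assume k: "1 \<le> k" "k < n"
    have "mean (Suc k) - mean k \<le> h (real k) / real k"
      using IH k by (simp add: field_simps)
    also have "\<dots> \<le> h (real k)"
      using k h0[of "real k"] by (simp add: divide_le_eq mult_le_cancel_left1)
    also have "\<dots> \<le> h (real n)" using k by (intro monoD[OF hm]) simp
    finally show "mean (Suc k) - mean k \<le> h (real n)" .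
  qed
  then show ?thesis using mean_1 h0[of "real n"] by (simp add: algebra_simps)
qed

lemma increment_step:
  fixes h :: "real \<Rightarrow> real" and a gn E P :: real
  assumes hm: "mono h" and h0: "\<And>x. 0 \<le> h x"
    and IH: "\<And>k. 1 \<le> k \<Longrightarrow> k < n \<Longrightarrow> real k * (mean (Suc k) - mean k) \<le> h (real k)"
    and n: "n \<ge> 2" and a: "a > 0" and gn: "gn < real n"
    and E: "measure_pmf.expectation (Y (n+1)) real - measure_pmf.expectation (Y n) real \<le> E"
    and P: "measure (Y n) {k. real k < a} + measure (Y (n+1)) {k. real k > gn} \<le> P" "P < 1"
    and cond: "real n * E / a * h gn + P * (real n ^ 2 + 1) * h (real n) \<le> h (real n)"
  shows "real n * (mean (Suc n) - mean n) \<le> h (real n)"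
proof -
  define H where "H = h gn / a"
  have H0: "H \<ge> 0" unfolding H_def using h0 a by simp
  define D where "D = mean (Suc n) - mean n"
  have window: "mean (Suc k) - mean k \<le> H" if k: "1 \<le> k" "a \<le> real k" "real k < gn" for k
  proof -
    have "mean (Suc k) - mean k \<le> h (real k) / real k"
      using IH[of k] k gn by (simp add: field_simps)
    also have "\<dots> \<le> h gn / real k" using k by (intro divide_right_mono monoD[OF hm]) auto
    also have "\<dots> \<le> h gn / a" using k a h0[of gn] by (intro divide_left_mono) auto
    finally show ?thesis unfolding H_def .
  qed
  have P0: "0 \<le> P" using P(1) measure_nonneg[of "Y n"] measure_nonneg[of "Y (n+1)"] by (meson add_nonneg_nonneg order.trans)
  have mean_n: "mean n \<le> real n * h (real n)"
    using n by (intro mean_le_by_increments[OF hm h0 IH]) auto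
  have "D \<le> H * (measure_pmf.expectation (Y (n+1)) real - measure_pmf.expectation (Y n) real)
      + (measure (Y n) {k. real k < a} + measure (Y (n+1)) {k. real k > gn}) * mean (Suc n)"
    unfolding D_def by (rule increment_by_coupling[OF n H0 window])
  then have "D \<le> H * E + P * mean (Suc n)"
    using mult_left_mono[OF E H0] mult_right_mono[OF P(1) mean_nonneg[of "Suc n"]] by linarith
  also have "\<dots> \<le> H * E + P * (real n * h (real n) + D)"
    using mean_n P0 unfolding D_def by (intro add_left_mono mult_left_mono) auto
  finally have "D * (1 - P) \<le> H * E + P * real n * h (real n)" by (simp add: algebra_simps)
  then have "real n * (D * (1 - P)) \<le> real n * (H * E + P * real n * h (real n))"
    by (intro mult_left_mono) auto
  also have "\<dots> = real n * E / a * h gn + P * real n ^ 2 * h (real n)"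
    unfolding H_def by (simp add: algebra_simps power2_eq_square)
  also have "\<dots> \<le> h (real n) - P * h (real n)" using cond by (simp add: algebra_simps)
  finally have "(real n * D) * (1 - P) \<le> h (real n) * (1 - P)" by (simp add: algebra_simps)
  then show ?thesis unfolding D_def[symmetric] using P(2) by simp
qed

lemma mean_increment_bigO:
  assumes A: "\<And>n. 1 \<le> n \<Longrightarrow> real n * (mean (Suc n) - mean n) \<le> A"
  shows "(\<lambda>n. measure_pmf.expectation (X (n+1)) real - measure_pmf.expectation (X n) real)
           \<in> O(\<lambda>n. 1 / real n)"
proof (rule landau_o.bigI[of "max A 1"])
  show "eventually (\<lambda>n. norm (measure_pmf.expectation (X (n+1)) real - measure_pmf.expectation (X n) real)
      \<le> max A 1 * norm (1 / real n)) at_top"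
    unfolding eventually_at_top_linorder
  proof (intro exI allI impI)
    fix n :: nat assume n: "n \<ge> 1"
    have "real n * (mean (Suc n) - mean n) \<le> max A 1" using A[OF n] by (simp add: le_max_iff_disj)
    then have "mean (Suc n) - mean n \<le> max A 1 / real n"
      using n by (simp add: pos_le_divide_eq mult.commute)
    moreover have "norm (measure_pmf.expectation (X (n+1)) real - measure_pmf.expectation (X n) real)
        = mean (Suc n) - mean n"
      using mean_mono[of n "Suc n"] n by (simp add: mean_def)
    ultimately show "norm (measure_pmf.expectation (X (n+1)) real - measure_pmf.expectation (X n) real)
        \<le> max A 1 * norm (1 / real n)"
      by simp
  qed
qed simp

lemma dW_bound:
  assumes A: "\<And>n. 1 \<le> n \<Longrightarrow> real n * (mean (Suc n) - mean n) \<le> A"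
  shows "\<exists>C::real. \<forall>n\<ge>1. \<forall>m\<ge>1. dW (X n) (X m) \<le> ennreal (C * \<bar>real n - real m\<bar> / real (min n m))"
proof -
  define C where "C = max A 1"
  have mean_diff: "mean m - mean n \<le> C * \<bar>real n - real m\<bar> / real (min n m)"
    if "1 \<le> n" "n \<le> m" for n m
  proof -
    have "mean m - mean n \<le> (C / real n) * (real m - real n)"
    proof (rule mean_telescope_bound[OF that(2)])
      fix k assume k: "n \<le> k" "k < m"
      have "real k * (mean (Suc k) - mean k) \<le> C" using A[of k] k that unfolding C_def by simp
      then have "mean (Suc k) - mean k \<le> C / real k" using k that by (simp add: field_simps)
      also have "\<dots> \<le> C / real n" using k that by (intro divide_left_mono) (auto simp: C_def)
      finally show "mean (Suc k) - mean k \<le> C / real n" .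
    qed
    then show ?thesis using that by (simp add: min_def)
  qed
  have "dW (X n) (X m) \<le> ennreal (C * \<bar>real n - real m\<bar> / real (min n m))" if "n \<ge> 1" "m \<ge> 1" for n m
  proof (cases "n \<le> m")
    case True
    have "dW (X n) (X m) \<le> ennreal (mean m - mean n)" by (rule dW_le_mean_diff(1)[OF that(1) True])
    also have "\<dots> \<le> ennreal (C * \<bar>real n - real m\<bar> / real (min n m))"
      by (rule ennreal_leI[OF mean_diff[OF that(1) True]])
    finally show ?thesis .
  next
    case False
    then have mn: "m \<le> n" by simp
    have "dW (X n) (X m) \<le> ennreal (mean n - mean m)" by (rule dW_le_mean_diff(2)[OF that(2) mn])
    also have "\<dots> \<le> ennreal (C * \<bar>real n - real m\<bar> / real (min n m))"
      using mean_diff[OF that(2) mn] by (intro ennreal_leI) (simp add: abs_minus_commute min.commute)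
    finally show ?thesis .
  qed
  then show ?thesis by blast
qed

end

section \<open>Bounded scaled increments under the quantitative part of Condition 1\<close>

text \<open>The quantitative part of Condition 1, with the Landau symbols made explicit from N1 on.\<close>
locale leader_election_rates = leader_election_process +
  fixes \<alpha> \<epsilon> c1 c2 c3 :: real and \<delta> :: "nat \<Rightarrow> real" and N1 :: nat
  assumes alpha: "0 < \<alpha>" "\<alpha> < 1" and eps: "0 < \<epsilon>"
    and coeffs: "0 < c1" "0 \<le> c2" "0 \<le> c3" and N1: "2 \<le> N1"
    and delta_bound: "\<And>n. N1 \<le> n \<Longrightarrow> \<bar>\<delta> n\<bar> \<le> c1 * ln (real n) powr (-1-\<epsilon>)"
    and drift_bound: "\<And>n. N1 \<le> n \<Longrightarrow>
      measure_pmf.expectation (Y (n+1)) real - measure_pmf.expectation (Y n) real - \<alpha> \<le> c2 * \<bar>\<delta> n\<bar>"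
    and tail_bound: "\<And>n. N1 \<le> n \<Longrightarrow>
      measure (Y n) {k. \<bar>real k - \<alpha> * real n\<bar> > \<delta> n * real n} \<le> c3 * real n powr (-2-\<epsilon>)"
begin

text \<open>The error rate (ln n)^(-1-\<epsilon>) and the constants of the induction: the window is
  [(\<alpha> - c1 rate n) n, \<gamma> n]; drift_coeff and tail_coeff bound the drift error and the
  exit probabilities in units of the rate; the weight gains a factor 1 + gain * rate n
  between \<gamma> n and n, which requires the exponent weight_exp.\<close>
definition rate :: "nat \<Rightarrow> real" where "rate n = ln (real n) powr (-1-\<epsilon>)"
definition \<gamma> :: real where "\<gamma> = (1 + \<alpha>) / 2"
definition drift_coeff :: real where "drift_coeff = c1 * c2"
definition tail_coeff :: real where "tail_coeff = 4 * c3 * (\<epsilon> / (1 + \<epsilon>)) powr (-1-\<epsilon>)"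
definition gain :: real where "gain = (c1 + drift_coeff + tail_coeff * \<alpha> + 1) / \<alpha>"
definition weight_exp :: real where "weight_exp = gain / (\<epsilon> * - ln \<gamma>)"
definition rate_threshold :: real where
  "rate_threshold = min (\<alpha> / (2 * c1)) (min ((1 - \<alpha>) / (4 * c1))
     (min (1 / (2 * tail_coeff + 1)) (1 / (tail_coeff * \<alpha> * gain + c1 * gain + 1))))"
definition weight :: "real \<Rightarrow> real \<Rightarrow> real" where
  "weight A x = A * exp (- weight_exp * ln (max x 3) powr (-\<epsilon>))"

lemma gamma_bounds: "0 < \<gamma>" "\<gamma> < 1"
  unfolding \<gamma>_def using alpha by auto

lemma coeffs_nonneg: "0 \<le> drift_coeff" "0 \<le> tail_coeff"
  unfolding drift_coeff_def tail_coeff_def using coeffs by auto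

lemma gain_pos: "0 < gain"
  unfolding gain_def using alpha coeffs coeffs_nonneg by (intro divide_pos_pos add_nonneg_pos) auto

lemma gain_eq: "\<alpha> * gain = c1 + drift_coeff + tail_coeff * \<alpha> + 1"
  unfolding gain_def using alpha by simp

lemma weight_exp_pos: "0 < weight_exp"
  unfolding weight_exp_def by (rule divide_pos_pos[OF gain_pos]) (use eps gamma_bounds in \<open>simp add: mult_pos_neg\<close>)

lemma weight_exp_eq: "weight_exp * (\<epsilon> * - ln \<gamma>) = gain"
  unfolding weight_exp_def using gamma_bounds eps by simp

lemma rate_threshold_pos: "0 < rate_threshold"
  unfolding rate_threshold_def using alpha coeffs coeffs_nonneg gain_pos
  by (auto intro!: divide_pos_pos add_nonneg_pos mult_nonneg_nonneg)

lemma rate_pos: "2 \<le> n \<Longrightarrow> 0 < rate n"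
  unfolding rate_def by simp

lemma rate_eventually_small: "\<exists>Nt. \<forall>n\<ge>Nt. rate n \<le> rate_threshold"
  using ln_powr_neg_eventually_le[OF eps rate_threshold_pos] unfolding rate_def .

lemma drift_le: "N1 \<le> n \<Longrightarrow>
  measure_pmf.expectation (Y (n+1)) real - measure_pmf.expectation (Y n) real \<le> \<alpha> + drift_coeff * rate n"
  using drift_bound[of n] mult_left_mono[OF delta_bound[of n] coeffs(2)]
  unfolding drift_coeff_def rate_def by (simp add: algebra_simps)

text \<open>What smallness of the rate buys: the window has positive length, the drift and tail
  errors stay below the fixed margins used in the balance inequality.\<close>
lemma below_rate_threshold:
  assumes t: "0 < t" "t \<le> rate_threshold"
  shows "c1 * t \<le> \<alpha> / 2" "c1 * t \<le> (1 - \<alpha>) / 4" "tail_coeff * t \<le> 1 / 2"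
    and "(tail_coeff * \<alpha> * gain + c1 * gain) * t \<le> 1"
proof -
  have thr: "t \<le> \<alpha> / (2 * c1)" "t \<le> (1 - \<alpha>) / (4 * c1)" "t \<le> 1 / (2 * tail_coeff + 1)"
    "t \<le> 1 / ((tail_coeff * \<alpha> * gain + c1 * gain) + 1)"
    using t(2) unfolding rate_threshold_def by auto
  show "c1 * t \<le> \<alpha> / 2" "c1 * t \<le> (1 - \<alpha>) / 4"
    using thr(1,2) coeffs by (simp_all add: field_simps)
  show "tail_coeff * t \<le> 1 / 2"
    using mult_le_1_if_le_inverse[OF _ t(1) thr(3)] coeffs_nonneg by simp
  show "(tail_coeff * \<alpha> * gain + c1 * gain) * t \<le> 1"
    using coeffs coeffs_nonneg alpha gain_pos
    by (intro mult_le_1_if_le_inverse[OF _ t(1) thr(4)] add_nonneg_nonneg mult_nonneg_nonneg) auto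
qed

text \<open>Leaving the window to the left is a large deviation of Y_n.\<close>
lemma lower_tail:
  assumes n: "N1 \<le> n"
  shows "measure (Y n) {k. real k < (\<alpha> - c1 * rate n) * real n} \<le> c3 * real n powr (-2-\<epsilon>)"
proof -
  have "{k. real k < (\<alpha> - c1 * rate n) * real n} \<subseteq> {k. \<bar>real k - \<alpha> * real n\<bar> > \<delta> n * real n}"
  proof safe
    fix k assume k: "real k < (\<alpha> - c1 * rate n) * real n"
    have "\<delta> n * real n \<le> \<bar>\<delta> n\<bar> * real n" by (intro mult_right_mono) auto
    also have "\<dots> \<le> c1 * rate n * real n"
      using delta_bound[OF n] unfolding rate_def by (intro mult_right_mono) auto
    also have "\<dots> < \<bar>real k - \<alpha> * real n\<bar>" using k by (simp add: algebra_simps)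
    finally show "\<bar>real k - \<alpha> * real n\<bar> > \<delta> n * real n" .
  qed
  then have "measure (Y n) {k. real k < (\<alpha> - c1 * rate n) * real n}
      \<le> measure (Y n) {k. \<bar>real k - \<alpha> * real n\<bar> > \<delta> n * real n}"
    by (intro measure_pmf.finite_measure_mono) auto
  also have "\<dots> \<le> c3 * real n powr (-2-\<epsilon>)" by (rule tail_bound[OF n])
  finally show ?thesis .
qed

text \<open>Leaving the window to the right is a large deviation of Y_{n+1}.\<close>
lemma upper_tail:
  assumes n: "N1 \<le> n" and small: "c1 * rate (n+1) \<le> (1 - \<alpha>) / 4"
    and big: "(3 * \<alpha> + 1) / (1 - \<alpha>) \<le> real n"
  shows "measure (Y (n+1)) {k. real k > \<gamma> * real n} \<le> c3 * real n powr (-2-\<epsilon>)"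
proof -
  have n': "N1 \<le> n + 1" using n by simp
  have "3 * \<alpha> + 1 \<le> (1 - \<alpha>) * real n" using big alpha by (simp add: field_simps)
  then have margin: "(\<alpha> + c1 * rate (n+1)) * (real n + 1) \<le> \<gamma> * real n"
    using mult_right_mono[OF small, of "real n + 1"] unfolding \<gamma>_def by (simp add: field_simps)
  have "{k. real k > \<gamma> * real n} \<subseteq> {k. \<bar>real k - \<alpha> * real (n+1)\<bar> > \<delta> (n+1) * real (n+1)}"
  proof safe
    fix k assume k: "real k > \<gamma> * real n"
    have "\<delta> (n+1) * real (n+1) \<le> \<bar>\<delta> (n+1)\<bar> * real (n+1)" by (intro mult_right_mono) auto
    also have "\<dots> \<le> c1 * rate (n+1) * real (n+1)"
      using delta_bound[OF n'] unfolding rate_def by (intro mult_right_mono) auto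
    also have "\<dots> < \<bar>real k - \<alpha> * real (n+1)\<bar>" using k margin by (simp add: algebra_simps)
    finally show "\<bar>real k - \<alpha> * real (n+1)\<bar> > \<delta> (n+1) * real (n+1)" .
  qed
  then have "measure (Y (n+1)) {k. real k > \<gamma> * real n}
      \<le> measure (Y (n+1)) {k. \<bar>real k - \<alpha> * real (n+1)\<bar> > \<delta> (n+1) * real (n+1)}"
    by (intro measure_pmf.finite_measure_mono) auto
  also have "\<dots> \<le> c3 * real (n+1) powr (-2-\<epsilon>)" by (rule tail_bound[OF n'])
  also have "\<dots> \<le> c3 * real n powr (-2-\<epsilon>)"
    using coeffs eps N1 n by (intro mult_left_mono powr_mono2') auto
  finally show ?thesis .
qed

text \<open>Both exit probabilities, multiplied by the factor n^2 + 1 with which they enter the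
  increment inequality, are of the order of the error rate.\<close>
lemma tail_budget:
  assumes n: "2 \<le> n"
  shows "2 * c3 * real n powr (-2-\<epsilon>) * (real n ^ 2 + 1) \<le> tail_coeff * rate n"
proof -
  have x1: "1 < real n" using n by simp
  have "2 * c3 * real n powr (-2-\<epsilon>) * (real n ^ 2 + 1) \<le> 2 * c3 * real n powr (-2-\<epsilon>) * (2 * real n ^ 2)"
    using x1 coeffs by (intro mult_left_mono) auto
  also have "\<dots> = 4 * c3 * (real n powr (-2-\<epsilon>) * real n powr 2)"
    using x1 by (simp add: powr_realpow)
  also have "real n powr (-2-\<epsilon>) * real n powr 2 = real n powr (-\<epsilon>)"
    by (simp only: powr_add[symmetric]) simp
  also have "4 * c3 * real n powr (-\<epsilon>) \<le> 4 * c3 * ((\<epsilon> / (1 + \<epsilon>)) powr (-1-\<epsilon>) * rate n)"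
    using powr_neg_le_ln_powr[OF eps x1] coeffs unfolding rate_def by (intro mult_left_mono) auto
  finally show ?thesis unfolding tail_coeff_def by (simp add: algebra_simps)
qed

lemma weight_mono: "0 \<le> A \<Longrightarrow> mono (weight A)"
proof (rule monoI)
  fix x y :: real assume A: "0 \<le> A" and "x \<le> y"
  then have "ln (max x 3) \<le> ln (max y 3)" by simp
  then have "ln (max y 3) powr (-\<epsilon>) \<le> ln (max x 3) powr (-\<epsilon>)"
    using eps one_le_ln_3 by (intro powr_mono2') auto
  then show "weight A x \<le> weight A y"
    unfolding weight_def using A weight_exp_pos by (simp add: mult_left_mono)
qed

lemma weight_nonneg: "0 \<le> A \<Longrightarrow> 0 \<le> weight A x"
  unfolding weight_def by simp

lemma weight_le: "0 \<le> A \<Longrightarrow> weight A x \<le> A"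
  unfolding weight_def using weight_exp_pos by (simp add: mult_left_le)

lemma weight_ge: "0 \<le> A \<Longrightarrow> A * exp (- weight_exp) \<le> weight A x"
proof -
  assume A: "0 \<le> A"
  have "1 \<le> ln (max x 3)" using one_le_ln_3 by (rule order.trans) simp
  then have "ln (max x 3) powr (-\<epsilon>) \<le> 1"
    using eps powr_mono2'[of "-\<epsilon>" 1 "ln (max x 3)"] by simp
  then show ?thesis
    unfolding weight_def using A weight_exp_pos by (intro mult_left_mono) auto
qed

text \<open>From \<gamma> x to x the weight grows at least by the factor 1 + gain (ln x)^(-1-\<epsilon>);
  this is the tangent bound for (ln x)^(-\<epsilon>) since ln (\<gamma> x) = ln x - ln (1/\<gamma>).\<close>
lemma weight_gain:
  assumes A: "0 \<le> A" and x: "3 \<le> \<gamma> * x"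
  shows "weight A (\<gamma> * x) * (1 + gain * ln x powr (-1-\<epsilon>)) \<le> weight A x"
proof -
  define cg where "cg = - ln \<gamma>"
  have cg: "0 < cg" unfolding cg_def using gamma_bounds by simp
  have "0 < \<gamma> * x" using x by simp
  then have x0: "0 < x" using gamma_bounds by (simp add: zero_less_mult_iff)
  have gx: "\<gamma> * x < x" using mult_strict_right_mono[OF gamma_bounds(2) x0] by simp
  have lg: "ln (\<gamma> * x) = ln x - cg" unfolding cg_def using gamma_bounds x0 by (simp add: ln_mult)
  have "1 \<le> ln x - cg" using one_le_ln_3 ln_le_cancel_iff[of 3 "\<gamma> * x"] x lg by simp
  then have tangent: "ln x powr (-\<epsilon>) + \<epsilon> * cg * ln x powr (-1-\<epsilon>) \<le> (ln x - cg) powr (-\<epsilon>)"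
    by (rule powr_neg_tangent_bound[OF eps cg])
  have t0: "0 \<le> ln x powr (-1-\<epsilon>)" by simp
  have v: "0 < 1 + gain * ln x powr (-1-\<epsilon>)" using gain_pos t0 by (simp add: add_pos_nonneg)
  have "weight A (\<gamma> * x) = A * exp (- weight_exp * (ln x - cg) powr (-\<epsilon>))"
    unfolding weight_def using x lg by (simp add: max_def)
  also have "\<dots> \<le> A * exp (- weight_exp * (ln x powr (-\<epsilon>) + \<epsilon> * cg * ln x powr (-1-\<epsilon>)))"
    using tangent A weight_exp_pos by (intro mult_left_mono) auto
  also have "\<dots> = weight A x * exp (- gain * ln x powr (-1-\<epsilon>))"
    unfolding weight_def weight_exp_eq[symmetric] cg_def using x gx
    by (simp add: algebra_simps exp_add[symmetric] max_def)
  also have "\<dots> \<le> weight A x * (1 / (1 + gain * ln x powr (-1-\<epsilon>)))"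
    using exp_neg_le_inverse[of "gain * ln x powr (-1-\<epsilon>)"] gain_pos t0 weight_nonneg[OF A]
    by (intro mult_left_mono) auto
  finally show ?thesis using v by (simp add: le_divide_eq)
qed

text \<open>The induction step for large n: the window, drift and tail estimates feed the
  increment inequality, and the balance inequality closes it.\<close>
lemma large_n_step:
  assumes n: "N1 \<le> n" and small: "rate n \<le> rate_threshold" "rate (n+1) \<le> rate_threshold"
    and big: "3 / \<gamma> \<le> real n" "(3 * \<alpha> + 1) / (1 - \<alpha>) \<le> real n" and A: "0 \<le> A"
    and IH: "\<And>k. 1 \<le> k \<Longrightarrow> k < n \<Longrightarrow> real k * (mean (Suc k) - mean k) \<le> weight A (real k)"
  shows "real n * (mean (Suc n) - mean n) \<le> weight A (real n)"
proof -
  define x t where "x = real n" and "t = rate n"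
  have n2: "2 \<le> n" using n N1 by simp
  have x0: "0 < x" unfolding x_def using n2 by simp
  have t: "0 < t" unfolding t_def using rate_pos[OF n2] .
  note left_margin = below_rate_threshold(1)[OF t small(1)[folded t_def]]
    and tail_small = below_rate_threshold(3)[OF t small(1)[folded t_def]]
    and quadratic_small = below_rate_threshold(4)[OF t small(1)[folded t_def]]
  have right_margin: "c1 * rate (n+1) \<le> (1 - \<alpha>) / 4"
    using below_rate_threshold(2)[OF rate_pos small(2)] n2 by simp
  define P where "P = 2 * c3 * x powr (-2-\<epsilon>)"
  have tails: "measure (Y n) {k. real k < (\<alpha> - c1 * t) * x} + measure (Y (n+1)) {k. real k > \<gamma> * x} \<le> P"
    using lower_tail[OF n] upper_tail[OF n right_margin big(2)] unfolding P_def x_def t_def by simp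
  have budget: "P * (x^2 + 1) \<le> tail_coeff * t"
    using tail_budget[OF n2] unfolding P_def x_def t_def by simp
  have P1: "P < 1"
  proof -
    have "P * 1 \<le> P * (x^2 + 1)" using coeffs unfolding P_def by (intro mult_left_mono) auto
    then show ?thesis using budget tail_small by simp
  qed
  have gx: "3 \<le> \<gamma> * x" using big(1) gamma_bounds unfolding x_def by (simp add: field_simps)
  have cond: "x * (\<alpha> + drift_coeff * t) / ((\<alpha> - c1 * t) * x) * weight A (\<gamma> * x)
      + P * (x^2 + 1) * weight A x \<le> weight A x"
    using weight_gain[OF A gx] weight_nonneg[OF A] budget
    by (intro balance_inequality[OF alpha(1) _ coeffs_nonneg gain_eq t left_margin tail_small quadratic_small x0])
      (auto simp: t_def x_def rate_def less_imp_le[OF coeffs(1)])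
  show ?thesis
    using increment_step[OF weight_mono[OF A] weight_nonneg[OF A] IH n2, of "(\<alpha> - c1 * t) * x" "\<gamma> * x"]
      drift_le[OF n] tails P1 cond x0 left_margin alpha gamma_bounds
    unfolding x_def t_def by (auto simp: power2_eq_square intro!: mult_pos_pos)
qed

text \<open>The main estimate: n (E X_{n+1} - E X_n) is bounded.  The amplitude A of the weight
  is chosen so that the finitely many small n are covered.\<close>
theorem increments_bounded: "\<exists>A. \<forall>n\<ge>1. real n * (mean (Suc n) - mean n) \<le> A"
proof -
  obtain Nt where Nt: "\<And>n. Nt \<le> n \<Longrightarrow> rate n \<le> rate_threshold"
    using rate_eventually_small by blast
  define Ns where "Ns = max (max N1 Nt) (max (nat \<lceil>3 / \<gamma>\<rceil>) (nat \<lceil>(3 * \<alpha> + 1) / (1 - \<alpha>)\<rceil>))"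
  define S where "S = (\<Sum>n<Ns. \<bar>real n * (mean (Suc n) - mean n)\<bar>)"
  define A where "A = exp weight_exp * (S + 1)"
  have A: "0 \<le> A" unfolding A_def S_def by (simp add: add_nonneg_nonneg sum_nonneg)
  have "real n * (mean (Suc n) - mean n) \<le> weight A (real n)" if "1 \<le> n" for n
    using that
  proof (induction n rule: less_induct)
    case (less n)
    show ?case
    proof (cases "n < Ns")
      case True
      have "real n * (mean (Suc n) - mean n) \<le> \<bar>real n * (mean (Suc n) - mean n)\<bar>"
        by (rule abs_ge_self)
      also have "\<dots> \<le> S" unfolding S_def using True by (intro member_le_sum) auto
      also have "S \<le> S + 1" by simp
      also have "\<dots> = A * exp (- weight_exp)" unfolding A_def by (simp add: exp_minus)
      also have "\<dots> \<le> weight A (real n)" by (rule weight_ge[OF A])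
      finally show ?thesis .
    next
      case False
      then have "Ns \<le> n" by simp
      then have large: "N1 \<le> n" "Nt \<le> n" "nat \<lceil>3 / \<gamma>\<rceil> \<le> n" "nat \<lceil>(3 * \<alpha> + 1) / (1 - \<alpha>)\<rceil> \<le> n"
        unfolding Ns_def max.bounded_iff by blast+
      show ?thesis
      proof (rule large_n_step[OF large(1) Nt Nt real_ge_of_nat_ceiling real_ge_of_nat_ceiling A])
        show "\<And>k. 1 \<le> k \<Longrightarrow> k < n \<Longrightarrow> real k * (mean (Suc k) - mean k) \<le> weight A (real k)"
          using less.IH by blast
      qed (use large in auto)
    qed
  qed
  then show ?thesis using weight_le[OF A] by (meson order.trans)
qed

end

lemma condition1_process:
  assumes "condition1 Y" "leader_election Y X"
  shows "leader_election_process Y X"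
  using assms unfolding condition1_def leader_election_def
  by unfold_locales blast+

text \<open>Making the O-bounds of Condition 1 explicit: all three hold with constants from some
  N1 \<ge> 2 on, where (ln 1)^(-1-\<epsilon>) no longer matters.\<close>
lemma condition1_rates:
  assumes "condition1 Y" "leader_election Y X"
  shows "\<exists>\<alpha> \<epsilon> c1 c2 c3 \<delta> N1. leader_election_rates Y X \<alpha> \<epsilon> c1 c2 c3 \<delta> N1"
proof -
  obtain \<alpha> \<epsilon> :: real and \<delta> :: "nat \<Rightarrow> real" where
    alpha: "0 < \<alpha>" "\<alpha> < 1" and eps: "0 < \<epsilon>" and
    delta: "\<delta> \<in> O(\<lambda>n. (if n = 1 then 1 else ln (real n)) powr (-1 - \<epsilon>))" and
    drift: "(\<lambda>n. measure_pmf.expectation (Y (n+1)) real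
              - measure_pmf.expectation (Y n) real - \<alpha>) \<in> O(\<delta>)" and
    tail: "(\<lambda>n. measure_pmf.prob (Y n) {k. \<bar>real k - \<alpha> * real n\<bar> > \<delta> n * real n})
           \<in> O(\<lambda>n. real n powr (-2 - \<epsilon>))"
    using assms(1) unfolding condition1_def by blast
  obtain c1 where c1: "c1 > 0" and ev1: "eventually (\<lambda>n. norm (\<delta> n)
      \<le> c1 * norm ((if n = 1 then 1 else ln (real n)) powr (-1 - \<epsilon>))) at_top"
    using landau_o.bigE[OF delta] by blast
  obtain c2 where c2: "c2 > 0" and ev2: "eventually (\<lambda>n. norm (measure_pmf.expectation (Y (n+1)) real
      - measure_pmf.expectation (Y n) real - \<alpha>) \<le> c2 * norm (\<delta> n)) at_top"
    using landau_o.bigE[OF drift] by blast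
  obtain c3 where c3: "c3 > 0" and ev3: "eventually (\<lambda>n. norm (measure_pmf.prob (Y n)
      {k. \<bar>real k - \<alpha> * real n\<bar> > \<delta> n * real n}) \<le> c3 * norm (real n powr (-2 - \<epsilon>))) at_top"
    using landau_o.bigE[OF tail] by blast
  from eventually_conj[OF ev1 eventually_conj[OF ev2 ev3]]
  obtain N where N: "\<And>n. n \<ge> N \<Longrightarrow> norm (\<delta> n) \<le> c1 * norm ((if n = 1 then 1 else ln (real n)) powr (-1 - \<epsilon>))
      \<and> norm (measure_pmf.expectation (Y (n+1)) real - measure_pmf.expectation (Y n) real - \<alpha>) \<le> c2 * norm (\<delta> n)
      \<and> norm (measure_pmf.prob (Y n) {k. \<bar>real k - \<alpha> * real n\<bar> > \<delta> n * real n}) \<le> c3 * norm (real n powr (-2 - \<epsilon>))"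
    unfolding eventually_at_top_linorder by blast
  have "leader_election_rates Y X \<alpha> \<epsilon> c1 c2 c3 \<delta> (max N 2)"
  proof (intro leader_election_rates.intro condition1_process[OF assms] leader_election_rates_axioms.intro)
    fix n assume n: "max N 2 \<le> n"
    then have Nn: "n \<ge> N" "n \<noteq> 1" by auto
    show "\<bar>\<delta> n\<bar> \<le> c1 * ln (real n) powr (-1-\<epsilon>)" using N[OF Nn(1)] Nn(2) by simp
    show "measure_pmf.expectation (Y (n+1)) real - measure_pmf.expectation (Y n) real - \<alpha> \<le> c2 * \<bar>\<delta> n\<bar>"
      using N[OF Nn(1)] by (simp add: abs_le_iff)
    show "measure (Y n) {k. \<bar>real k - \<alpha> * real n\<bar> > \<delta> n * real n} \<le> c3 * real n powr (-2-\<epsilon>)"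
      using N[OF Nn(1)] by simp
  qed (use alpha eps c1 c2 c3 in auto)
  then show ?thesis by blast
qed

theorem mainTheorem2:
  fixes Y X :: "nat \<Rightarrow> nat pmf"
  assumes "condition1 Y"
    and "leader_election Y X"
  shows "(\<forall>n\<ge>1. (\<integral>\<^sup>+ t. ennreal (real t) \<partial>(measure_pmf (X n))) < \<infinity>) \<and>
         ((\<lambda>n. measure_pmf.expectation (X (n+1)) real - measure_pmf.expectation (X n) real)
           \<in> O(\<lambda>n. 1 / real n)) \<and>
         (\<exists>C::real. \<forall>n\<ge>1. \<forall>m\<ge>1.
           dW (X n) (X m) \<le> ennreal (C * \<bar>real n - real m\<bar> / real (min n m)))"
proof -
  obtain \<alpha> \<epsilon> c1 c2 c3 \<delta> N1 where "leader_election_rates Y X \<alpha> \<epsilon> c1 c2 c3 \<delta> N1"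
    using condition1_rates[OF assms] by blast
  then interpret R: leader_election_rates Y X \<alpha> \<epsilon> c1 c2 c3 \<delta> N1 .
  obtain A where A: "\<And>n. 1 \<le> n \<Longrightarrow> real n * (R.mean (Suc n) - R.mean n) \<le> A"
    using R.increments_bounded by blast
  show ?thesis using R.mean_finite R.mean_increment_bigO[OF A] R.dW_bound[OF A] by blast
qed

end
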